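(* Let $n\in\mathbb{N}$ and let $f_t:[0,1]^n\to\mathbb{R}$ be differentiable, convex and bounded on $[0,1]^n$ with $\|\nabla f_t(\mathbf{x})\|_2\le L_2$ for all $\mathbf{x}\in[0,1]^n$, where $L_2\in(0,\infty)$. Let $\mathbf{x}_t\in[0,1]^n$ and let the binary decision $\hat{\mathbf{x}}_t=\mathcal{R}(\mathbf{x}_t)$ be computed by \texttt{bOGD} (described in the context). Then \[ \mathbb{E}\big[|f_t(\hat{\mathbf{x}}_t)-f_t(\mathbf{x}_t)|\big]\le \frac{L_2\sqrt{n}}{2}. \]
   Context: \texttt{bOGD} (binary online gradient descent) for a sequence of losses $f_1,f_2,\dots$ on $[0,1]^n$, with step size $\eta>0$ and $\lambda\ge0$: choose $\mathbf{x}_1\in[0,1]^n$; for each round $t$, implement $\hat{\mathbf{x}}_t=\mathcal{R}(\mathbf{x}_t)$, then observe $f_t$ and set $\mathbf{x}_{t+1}=\arg\min_{\mathbf{x}\in[0,1]^n}\ \eta\nabla f_t(\mathbf{x}_t)^\top\mathbf{x}+\tfrac12\|\mathbf{x}-\mathbf{x}_t\|_2^2+\eta\lambda\|\mathbf{x}\|_1$. The randomization map $\mathcal{R}:[0,1]^n\to\{0,1\}^n$ returns a random vector whose $i$-th entry is a Bernoulli random variable with success probability $\mathbf{x}_t(i)$, so that $\mathbb{E}[\mathcal{R}(\mathbf{x}_t)]=\mathbf{x}_t$. *)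

theory Defs
  imports "HOL-Analysis.Analysis" "HOL-Probability.Probability"
begin

definition unit_cube :: "(real ^ 'n) set" where
  "unit_cube = cbox 0 1"

definition randomize :: "real ^ 'n \<Rightarrow> (real ^ 'n) pmf" where
  "randomize x = map_pmf (\<lambda>b. \<chi> i. if b i then 1 else 0)
      (Pi_pmf UNIV False (\<lambda>i. bernoulli_pmf (x $ i)))"

end

theory Submission
  imports Defs
begin

text \<open>The gradient bound makes \<open>f\<close> \<open>L\<^sub>2\<close>-Lipschitz on the cube, so the expected error is at
  most \<open>L\<^sub>2 E \<parallel>R(x) - x\<parallel> \<le> L\<^sub>2 sqrt (E \<parallel>R(x) - x\<parallel>\<^sup>2)\<close>. The coordinates of \<open>R(x)\<close> are
  Bernoulli, so \<open>E \<parallel>R(x) - x\<parallel>\<^sup>2 = \<Sum>\<^sub>i x\<^sub>i (1 - x\<^sub>i) \<le> n/4\<close>.\<close>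

lemma inner_gradient_bound_imp_lipschitz:
  fixes f :: "'a::real_inner \<Rightarrow> real"
  assumes "convex S"
    and deriv: "\<And>y. y \<in> S \<Longrightarrow> (f has_derivative (\<lambda>h. grad y \<bullet> h)) (at y within S)"
    and grad_bound: "\<And>y. y \<in> S \<Longrightarrow> norm (grad y) \<le> L"
    and "y \<in> S" "z \<in> S"
  shows "\<bar>f y - f z\<bar> \<le> L * norm (y - z)"
proof -
  have "norm (f y - f z) \<le> L * norm (y - z)"
  proof (rule differentiable_bound[OF \<open>convex S\<close> deriv])
    show "onorm (\<lambda>h. grad u \<bullet> h) \<le> L" if "u \<in> S" for u
    proof (rule onorm_bound)
      show "0 \<le> L"
        using grad_bound[OF that] norm_ge_zero order_trans by blast
      show "norm (grad u \<bullet> h) \<le> L * norm h" for h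
        using Cauchy_Schwarz_ineq2[of "grad u" h] mult_right_mono[OF grad_bound[OF that], of "norm h"]
        by simp
    qed
  qed (use assms in auto)
  then show ?thesis
    by simp
qed

lemma (in prob_space) expectation_abs_le_sqrt_second_moment:
  fixes X :: "'a \<Rightarrow> real"
  assumes "integrable M X" "integrable M (\<lambda>\<omega>. (X \<omega>)\<^sup>2)"
  shows "expectation (\<lambda>\<omega>. \<bar>X \<omega>\<bar>) \<le> sqrt (expectation (\<lambda>\<omega>. (X \<omega>)\<^sup>2))"
proof (rule real_le_rsqrt)
  have "0 \<le> variance (\<lambda>\<omega>. \<bar>X \<omega>\<bar>)"
    by simp
  also have "\<dots> = expectation (\<lambda>\<omega>. (X \<omega>)\<^sup>2) - (expectation (\<lambda>\<omega>. \<bar>X \<omega>\<bar>))\<^sup>2"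
    using variance_eq[of "\<lambda>\<omega>. \<bar>X \<omega>\<bar>"] assms by simp
  finally show "(expectation (\<lambda>\<omega>. \<bar>X \<omega>\<bar>))\<^sup>2 \<le> expectation (\<lambda>\<omega>. (X \<omega>)\<^sup>2)"
    by simp
qed

lemma finite_set_pmf_randomize: "finite (set_pmf (randomize x))"
  unfolding randomize_def by simp

lemma set_pmf_randomize_subset: "set_pmf (randomize x) \<subseteq> unit_cube"
  unfolding randomize_def unit_cube_def by (auto simp: mem_box_cart)

lemma integrable_randomize: "integrable (measure_pmf (randomize x)) h"
  for h :: "real ^ 'n \<Rightarrow> real"
  by (rule integrable_measure_pmf_finite[OF finite_set_pmf_randomize])

lemma randomize_component:
  "map_pmf (\<lambda>y. y $ i) (randomize x) = map_pmf of_bool (bernoulli_pmf (x $ i))"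
proof -
  have "map_pmf (\<lambda>y. y $ i) (randomize x)
      = map_pmf of_bool (map_pmf (\<lambda>b. b i) (Pi_pmf UNIV False (\<lambda>i. bernoulli_pmf (x $ i))))"
    unfolding randomize_def by (simp add: map_pmf_comp of_bool_def)
  then show ?thesis
    by (simp add: Pi_pmf_component)
qed

lemma expectation_randomize_sq_dist:
  assumes "x \<in> unit_cube"
  shows "measure_pmf.expectation (randomize x) (\<lambda>y. (norm (y - x))\<^sup>2)
           = (\<Sum>i\<in>UNIV. x $ i * (1 - x $ i))"
proof -
  let ?E = "measure_pmf.expectation (randomize x)"
  have coordinate: "?E (\<lambda>y. (y $ i - x $ i)\<^sup>2) = x $ i * (1 - x $ i)" for i
  proof -
    have "0 \<le> x $ i" "x $ i \<le> 1"
      using assms unfolding unit_cube_def by (simp_all add: mem_box_cart)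
    have "?E (\<lambda>y. (y $ i - x $ i)\<^sup>2)
        = measure_pmf.expectation (map_pmf (\<lambda>y. y $ i) (randomize x)) (\<lambda>c. (c - x $ i)\<^sup>2)"
      by simp
    also have "\<dots> = measure_pmf.expectation (bernoulli_pmf (x $ i)) (\<lambda>b. (of_bool b - x $ i)\<^sup>2)"
      by (simp only: randomize_component integral_map_pmf)
    also have "\<dots> = x $ i * (1 - x $ i)"
      using \<open>0 \<le> x $ i\<close> \<open>x $ i \<le> 1\<close> by (simp add: power2_eq_square algebra_simps)
    finally show ?thesis .
  qed
  have norm_sq: "(norm (y - x))\<^sup>2 = (\<Sum>i\<in>UNIV. (y $ i - x $ i)\<^sup>2)" for y
    unfolding power2_norm_eq_inner inner_vec_def by (simp add: power2_eq_square)
  have "?E (\<lambda>y. (norm (y - x))\<^sup>2) = (\<Sum>i\<in>UNIV. ?E (\<lambda>y. (y $ i - x $ i)\<^sup>2))"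
    unfolding norm_sq by (rule Bochner_Integration.integral_sum[OF integrable_randomize])
  then show ?thesis
    by (simp only: coordinate)
qed

lemma expectation_randomize_sq_dist_le:
  fixes x :: "real ^ 'n"
  assumes "x \<in> unit_cube"
  shows "measure_pmf.expectation (randomize x) (\<lambda>y. (norm (y - x))\<^sup>2) \<le> real CARD('n) / 4"
proof -
  have "x $ i * (1 - x $ i) \<le> 1 / 4" for i
    using zero_le_power2[of "x $ i - 1 / 2"] by (simp add: power2_eq_square algebra_simps)
  then have "(\<Sum>i\<in>UNIV. x $ i * (1 - x $ i)) \<le> (\<Sum>i\<in>(UNIV::'n set). 1 / 4)"
    by (intro sum_mono)
  then show ?thesis
    by (simp add: expectation_randomize_sq_dist[OF assms])
qed

theorem lemma2:
  fixes f :: "real ^ 'n \<Rightarrow> real"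
    and grad :: "real ^ 'n \<Rightarrow> real ^ 'n"
    and L2 :: real
    and x :: "real ^ 'n"
  assumes deriv: "\<forall>y\<in>unit_cube. (f has_derivative (\<lambda>h. grad y \<bullet> h)) (at y within unit_cube)"
    and conv: "convex_on unit_cube f"
    and bdd: "bounded (f ` unit_cube)"
    and gradbd: "\<forall>y\<in>unit_cube. norm (grad y) \<le> L2"
    and L2pos: "L2 > 0"
    and x_in: "x \<in> unit_cube"
  shows "measure_pmf.expectation (randomize x) (\<lambda>y. \<bar>f y - f x\<bar>)
           \<le> L2 * sqrt (real CARD('n)) / 2"
proof -
  let ?E = "measure_pmf.expectation (randomize x)"
  have "?E (\<lambda>y. \<bar>f y - f x\<bar>) \<le> ?E (\<lambda>y. L2 * norm (y - x))"
    using set_pmf_randomize_subset x_in deriv gradbd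
    by (intro integral_mono_AE integrable_randomize AE_pmfI inner_gradient_bound_imp_lipschitz
          [of unit_cube]) (auto simp: unit_cube_def)
  also have "\<dots> = L2 * ?E (\<lambda>y. norm (y - x))"
    by simp
  also have "\<dots> \<le> L2 * sqrt (?E (\<lambda>y. (norm (y - x))\<^sup>2))"
    using L2pos measure_pmf.expectation_abs_le_sqrt_second_moment
      [of "randomize x" "\<lambda>y. norm (y - x)", OF integrable_randomize integrable_randomize]
    by (intro mult_left_mono) auto
  also have "\<dots> \<le> L2 * sqrt (real CARD('n) / 4)"
    using L2pos expectation_randomize_sq_dist_le[OF x_in] by (intro mult_left_mono real_sqrt_le_mono) auto
  also have "\<dots> = L2 * sqrt (real CARD('n)) / 2"
    by (simp add: real_sqrt_divide)
  finally show ?thesis .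
qed

end
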